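(* The following two statements are equivalent: (a) Every 2-connected cubic graph $G$ admits a proper $5$-edge-coloring $c$ with $|N_G(c)|\le 5$. (b) There exists a sublinear function $f:\mathbb{N}\to\mathbb{N}$ such that every 2-connected cubic graph $G$ admits a proper $5$-edge-coloring $c$ with $|N_G(c)|\le f(|V(G)|)$.
   Context: Graphs are finite, undirected, loopless, and may contain parallel edges. A proper $k$-edge-coloring of $G$ is a map $c:E(G)\to\{1,\dots,k\}$ with adjacent edges receiving different colors. For such $c$ and a vertex $v$, $S_c(v)$ is the set of colors on edges incident to $v$. An edge $uv$ of a cubic graph is poor if $|S_c(u)\cup S_c(v)|=3$, rich if $|S_c(u)\cup S_c(v)|=5$, and abnormal if it is neither poor nor rich. $N_G(c)$ denotes the set of abnormal edges of $G$ with respect to $c$. A function $f:\mathbb{N}\to\mathbb{N}$ is sublinear if $\lim_{n\to\infty} f(n)/n=0$. *)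

theory Defs
  imports Complex_Main
begin

text \<open>A finite loopless multigraph: vertex set V, edge set E (edges are names,
  so parallel edges are allowed), and an endpoint map ends assigning to each
  edge its set of exactly two distinct endpoints.  Vertices and edges are
  labelled by natural numbers (every finite multigraph has such a copy).\<close>

definition multigraph :: "nat set \<Rightarrow> nat set \<Rightarrow> (nat \<Rightarrow> nat set) \<Rightarrow> bool" where
  "multigraph V E ends \<longleftrightarrow> finite V \<and> finite E \<and>
     (\<forall>e\<in>E. ends e \<subseteq> V \<and> card (ends e) = 2)"

definition incident_edges :: "nat set \<Rightarrow> (nat \<Rightarrow> nat set) \<Rightarrow> nat \<Rightarrow> nat set" where
  "incident_edges E ends v = {e\<in>E. v \<in> ends e}"

definition cubic :: "nat set \<Rightarrow> nat set \<Rightarrow> (nat \<Rightarrow> nat set) \<Rightarrow> bool" where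
  "cubic V E ends \<longleftrightarrow> multigraph V E ends \<and>
     (\<forall>v\<in>V. card (incident_edges E ends v) = 3)"

definition adj_in :: "nat set \<Rightarrow> (nat \<Rightarrow> nat set) \<Rightarrow> nat set \<Rightarrow> nat \<Rightarrow> nat \<Rightarrow> bool" where
  "adj_in E ends S u v \<longleftrightarrow> u \<in> S \<and> v \<in> S \<and> (\<exists>e\<in>E. ends e = {u, v})"

definition connected_on :: "nat set \<Rightarrow> (nat \<Rightarrow> nat set) \<Rightarrow> nat set \<Rightarrow> bool" where
  "connected_on E ends S \<longleftrightarrow> S \<noteq> {} \<and>
     (\<forall>u\<in>S. \<forall>v\<in>S. (adj_in E ends S)\<^sup>*\<^sup>* u v)"

definition two_connected :: "nat set \<Rightarrow> nat set \<Rightarrow> (nat \<Rightarrow> nat set) \<Rightarrow> bool" where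
  "two_connected V E ends \<longleftrightarrow> card V \<ge> 2 \<and> connected_on E ends V \<and>
     (\<forall>v\<in>V. connected_on E ends (V - {v}))"

definition proper_edge_coloring ::
  "nat \<Rightarrow> nat set \<Rightarrow> (nat \<Rightarrow> nat set) \<Rightarrow> (nat \<Rightarrow> nat) \<Rightarrow> bool" where
  "proper_edge_coloring k E ends c \<longleftrightarrow>
     (\<forall>e\<in>E. c e \<in> {1..k}) \<and>
     (\<forall>e\<in>E. \<forall>e'\<in>E. e \<noteq> e' \<and> ends e \<inter> ends e' \<noteq> {} \<longrightarrow> c e \<noteq> c e')"

definition colors_at :: "nat set \<Rightarrow> (nat \<Rightarrow> nat set) \<Rightarrow> (nat \<Rightarrow> nat) \<Rightarrow> nat \<Rightarrow> nat set" where
  "colors_at E ends c v = c ` incident_edges E ends v"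

definition edge_color_span :: "nat set \<Rightarrow> (nat \<Rightarrow> nat set) \<Rightarrow> (nat \<Rightarrow> nat) \<Rightarrow> nat \<Rightarrow> nat" where
  "edge_color_span E ends c e = card (\<Union>x\<in>ends e. colors_at E ends c x)"

definition poor_edge where
  "poor_edge E ends c e \<longleftrightarrow> edge_color_span E ends c e = 3"

definition rich_edge where
  "rich_edge E ends c e \<longleftrightarrow> edge_color_span E ends c e = 5"

text \<open>N_G(c): the set of abnormal edges.\<close>
definition abnormal_edges :: "nat set \<Rightarrow> (nat \<Rightarrow> nat set) \<Rightarrow> (nat \<Rightarrow> nat) \<Rightarrow> nat set" where
  "abnormal_edges E ends c = {e\<in>E. \<not> poor_edge E ends c e \<and> \<not> rich_edge E ends c e}"

definition sublinear :: "(nat \<Rightarrow> nat) \<Rightarrow> bool" where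
  "sublinear f \<longleftrightarrow> (\<lambda>n. real (f n) / real n) \<longlonglongrightarrow> 0"

end

theory Submission
  imports Defs "HOL-Library.Nat_Bijection"
begin

text \<open>(b) trivially follows from (a) with the constant bound 5.  Conversely, suppose a
  2-connected cubic graph G with n vertices has more than 5 abnormal edges under every
  proper 5-edge-colouring.  Pick an edge e0 = uv and chain k copies of G - e0 into a ring,
  joining v in copy p to u in copy p+1.  The result H_k is again cubic and 2-connected and
  has kn vertices.  Restricting a colouring of H_k to one copy and giving e0 a colour unused
  on the at most four edges adjacent to it yields a colouring of G whose abnormal edges lie
  among the at most five edges at u and v, together with the edges whose copies are abnormal
  in H_k.  Hence every copy contains an abnormal edge, so H_k has at least k abnormal edges,
  which is incompatible with a sublinear bound f(kn) for large k.\<close>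

lemma adj_in_sym: "adj_in E ends S a b \<Longrightarrow> adj_in E ends S b a"
  by (auto simp: adj_in_def insert_commute)

lemma reach_in_sym: "(adj_in E ends S)\<^sup>*\<^sup>* a b \<Longrightarrow> (adj_in E ends S)\<^sup>*\<^sup>* b a"
proof (induction rule: rtranclp.induct)
  case (rtrancl_into_rtrancl a b c)
  then show ?case by (meson adj_in_sym converse_rtranclp_into_rtranclp)
qed auto

lemma reach_in_mono:
  assumes "(adj_in E ends S)\<^sup>*\<^sup>* a b" "S \<subseteq> T" "E \<subseteq> E'"
  shows "(adj_in E' ends T)\<^sup>*\<^sup>* a b"
  using assms(1)
proof (induction rule: rtranclp.induct)
  case (rtrancl_into_rtrancl a b c)
  then have "adj_in E' ends T b c" using assms(2,3) by (auto simp: adj_in_def)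
  then show ?case using rtrancl_into_rtrancl by (meson rtranclp.rtrancl_into_rtrancl)
qed auto

lemma sublinear_const: "sublinear (\<lambda>_. a)"
  unfolding sublinear_def using lim_const_over_n[of "real a"] by simp

lemma sublinear_ex_less_at_multiple:
  assumes "sublinear f" "0 < n"
  shows "\<exists>k\<ge>m. f (k * n) < k"
proof -
  have "strict_mono (\<lambda>k. k * n)" using assms(2) by (auto simp: strict_mono_def)
  then have "(\<lambda>k. real (f (k * n)) / real (k * n)) \<longlonglongrightarrow> 0"
    using LIMSEQ_subseq_LIMSEQ[OF assms(1)[unfolded sublinear_def]] unfolding o_def by blast
  moreover have "0 < 1 / real n" using assms(2) by simp
  ultimately have "eventually (\<lambda>k. real (f (k * n)) / real (k * n) < 1 / real n) sequentially"
    by (rule order_tendstoD(2))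
  then obtain N where N: "\<And>k. k \<ge> N \<Longrightarrow> real (f (k * n)) / real (k * n) < 1 / real n"
    unfolding eventually_sequentially by blast
  define k where "k = max N (max m 1)"
  have k: "k \<ge> max m 1" "real (f (k * n)) / real (k * n) < 1 / real n"
    using N[of k] by (auto simp: k_def)
  moreover have pos: "0 < real (k * n)" using k(1) assms(2) by simp
  ultimately have "real (f (k * n)) < 1 / real n * real (k * n)"
    by (simp add: divide_less_eq)
  also have "\<dots> = real k" using assms(2) by simp
  finally show ?thesis using k(1) by auto
qed

lemma ex_color_not_in_image:
  assumes "finite A" "card A < n"
  shows "\<exists>g\<in>{1..n::nat}. g \<notin> f ` A"
proof -
  have "card (f ` A) < card {1..n}" using card_image_le[OF assms(1), of f] assms(2) by simp
  then have "\<not> {1..n} \<subseteq> f ` A" using card_mono[of "f ` A" "{1..n}"] assms(1) by auto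
  then show ?thesis by blast
qed

lemma card_2_obtain_other: "card A = 2 \<Longrightarrow> u \<in> A \<Longrightarrow> \<exists>z. z \<noteq> u \<and> A = {u, z}"
  unfolding card_2_iff by auto

locale cubic_2conn_with_edge =
  fixes V E ends u v e0
  assumes cubic: "cubic V E ends" and two_conn: "two_connected V E ends"
    and e0_in_E: "e0 \<in> E" and ends_e0: "ends e0 = {u, v}" and u_ne_v: "u \<noteq> v"
begin

lemma finite_V: "finite V" and finite_E: "finite E"
  and ends_subset: "e \<in> E \<Longrightarrow> ends e \<subseteq> V" and card_ends: "e \<in> E \<Longrightarrow> card (ends e) = 2"
  using cubic by (auto simp: cubic_def multigraph_def)

lemma u_in_V: "u \<in> V" and v_in_V: "v \<in> V"
  using ends_subset[OF e0_in_E] ends_e0 by auto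

lemma card_incident: "x \<in> V \<Longrightarrow> card (incident_edges E ends x) = 3"
  using cubic by (simp add: cubic_def)

lemma two_le_card_V: "2 \<le> card V"
  using two_conn by (simp add: two_connected_def)

lemma reach_end_avoiding_e0:
  assumes "connected_on E ends S" "y \<in> S" "u \<in> S \<or> v \<in> S"
  shows "(u \<in> S \<and> (adj_in (E - {e0}) ends S)\<^sup>*\<^sup>* y u) \<or>
         (v \<in> S \<and> (adj_in (E - {e0}) ends S)\<^sup>*\<^sup>* y v)"
proof -
  obtain z where z: "z \<in> S" "z = u \<or> z = v" using assms(3) by auto
  have "(adj_in E ends S)\<^sup>*\<^sup>* y z" using assms(1,2) z(1) by (auto simp: connected_on_def)
  then show ?thesis
  proof (induction rule: converse_rtranclp_induct)
    case base then show ?case using z by auto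
  next
    case (step y y')
    show ?case
    proof (cases "y = u \<or> y = v")
      case True with step(1) show ?thesis by (auto simp: adj_in_def)
    next
      case False
      from step(1) obtain e where e: "e \<in> E" "ends e = {y, y'}" "y \<in> S" "y' \<in> S"
        by (auto simp: adj_in_def)
      have "e \<noteq> e0" using e(2) ends_e0 False by auto
      then have "adj_in (E - {e0}) ends S y y'" using e by (auto simp: adj_in_def)
      with step(3) show ?thesis by (meson converse_rtranclp_into_rtranclp)
    qed
  qed
qed

lemma u_reach_v_avoiding_e0: "(adj_in (E - {e0}) ends V)\<^sup>*\<^sup>* u v"
proof -
  have "\<not> incident_edges E ends u \<subseteq> {e0}"
  proof
    assume "incident_edges E ends u \<subseteq> {e0}"
    then have "card (incident_edges E ends u) \<le> 1" using card_mono[of "{e0}"] by fastforce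
    then show False using card_incident[OF u_in_V] by simp
  qed
  then obtain e1 where e1: "e1 \<in> E" "e1 \<noteq> e0" "u \<in> ends e1" by (auto simp: incident_edges_def)
  obtain z where z: "z \<noteq> u" "ends e1 = {u, z}" using card_2_obtain_other[OF card_ends e1(3)] e1 by blast
  have z_in_V: "z \<in> V" using ends_subset[OF e1(1)] z by auto
  have u_z: "adj_in (E - {e0}) ends V u z" using e1 z z_in_V u_in_V by (auto simp: adj_in_def)
  have "(adj_in (E - {e0}) ends V)\<^sup>*\<^sup>* z v"
  proof (cases "z = v")
    case False
    have "connected_on E ends (V - {u})" using two_conn u_in_V by (auto simp: two_connected_def)
    moreover have "z \<in> V - {u}" "v \<in> V - {u}" using z_in_V z(1) v_in_V u_ne_v by auto
    ultimately have "(adj_in (E - {e0}) ends (V - {u}))\<^sup>*\<^sup>* z v"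
      using reach_end_avoiding_e0[of "V - {u}" z] by blast
    then show ?thesis by (rule reach_in_mono) auto
  qed simp
  then show ?thesis using u_z by (meson converse_rtranclp_into_rtranclp)
qed

lemma reach_u_avoiding_e0:
  assumes "y \<in> V" shows "(adj_in (E - {e0}) ends V)\<^sup>*\<^sup>* y u"
proof -
  have "connected_on E ends V" using two_conn by (simp add: two_connected_def)
  then show ?thesis
    using reach_end_avoiding_e0[OF _ assms] u_in_V reach_in_sym[OF u_reach_v_avoiding_e0]
    by (meson rtranclp_trans)
qed

end

definition copy :: "nat \<Rightarrow> nat \<Rightarrow> nat" where "copy i x = prod_encode (i, x)"

definition ring_next :: "nat \<Rightarrow> nat \<Rightarrow> nat" where
  "ring_next k p = (if Suc p = k then 0 else Suc p)"

definition ring_after :: "nat \<Rightarrow> nat \<Rightarrow> nat \<Rightarrow> nat" where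
  "ring_after k j d = (if j + 1 + d < k then j + 1 + d else j + 1 + d - k)"

lemma copy_eq_iff[simp]: "copy i x = copy j y \<longleftrightarrow> i = j \<and> x = y"
  by (simp add: copy_def)

lemma double_ne_Suc_double[simp]: "2 * (a::nat) \<noteq> Suc (2 * b)" "Suc (2 * b) \<noteq> 2 * (a::nat)"
  by presburger+

lemma ring_next_less: "p < k \<Longrightarrow> ring_next k p < k"
  by (auto simp: ring_next_def)

lemma ring_after_less_ne:
  "2 \<le> k \<Longrightarrow> j < k \<Longrightarrow> d \<le> k - 2 \<Longrightarrow> ring_after k j d < k \<and> ring_after k j d \<noteq> j"
  by (auto simp: ring_after_def)

lemma ring_after_0: "j < k \<Longrightarrow> ring_after k j 0 = ring_next k j"
  by (auto simp: ring_after_def ring_next_def)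

lemma ring_after_Suc:
  "2 \<le> k \<Longrightarrow> j < k \<Longrightarrow> Suc d \<le> k - 2 \<Longrightarrow> ring_after k j (Suc d) = ring_next k (ring_after k j d)"
  by (auto simp: ring_after_def ring_next_def)

lemma ring_after_last: "2 \<le> k \<Longrightarrow> j < k \<Longrightarrow> ring_next k (ring_after k j (k - 2)) = j"
  by (auto simp: ring_after_def ring_next_def)

lemma ring_after_surj:
  assumes "j < k" "i < k" "i \<noteq> j"
  shows "\<exists>d \<le> k - 2. ring_after k j d = i"
proof (cases "j < i")
  case True
  then show ?thesis using assms by (intro exI[of _ "i - j - 1"]) (auto simp: ring_after_def)
next
  case False
  then show ?thesis using assms by (intro exI[of _ "i + k - j - 1"]) (auto simp: ring_after_def)
qed

context cubic_2conn_with_edge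
begin

text \<open>The ring H_k: vertex x of copy i is labelled copy i x; edge e of copy i gets the even
  label 2 * copy i e, and the link from v in copy p to u in copy p+1 the odd label 2p+1.\<close>

definition ring_V :: "nat \<Rightarrow> nat set" where
  "ring_V k = (\<lambda>(i, x). copy i x) ` ({..<k} \<times> V)"

definition ring_E :: "nat \<Rightarrow> nat set" where
  "ring_E k = (\<lambda>(i, e). 2 * copy i e) ` ({..<k} \<times> (E - {e0})) \<union> (\<lambda>p. 2 * p + 1) ` {..<k}"

definition ring_ends :: "nat \<Rightarrow> nat \<Rightarrow> nat set" where
  "ring_ends k h = (if even h then (case prod_decode (h div 2) of (i, e) \<Rightarrow> copy i ` ends e)
     else {copy (h div 2) v, copy (ring_next k (h div 2)) u})"

lemma ring_ends_copy[simp]: "ring_ends k (2 * copy i e) = copy i ` ends e"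
  by (simp add: ring_ends_def copy_def)

lemma ring_ends_link[simp]: "ring_ends k (Suc (2 * p)) = {copy p v, copy (ring_next k p) u}"
  by (simp add: ring_ends_def)

lemma copy_in_ring_V[simp]: "copy i x \<in> ring_V k \<longleftrightarrow> i < k \<and> x \<in> V"
  by (auto simp: ring_V_def)

lemma in_ring_V: "a \<in> ring_V k \<longleftrightarrow> (\<exists>i x. i < k \<and> x \<in> V \<and> a = copy i x)"
  by (auto simp: ring_V_def)

lemma copy_edge_in_ring_E[simp]: "2 * copy i e \<in> ring_E k \<longleftrightarrow> i < k \<and> e \<in> E \<and> e \<noteq> e0"
  by (auto simp: ring_E_def)

lemma link_in_ring_E[simp]: "Suc (2 * p) \<in> ring_E k \<longleftrightarrow> p < k"
  by (auto simp: ring_E_def)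

lemma ring_E_cases:
  assumes "h \<in> ring_E k"
  obtains (copy_edge) i e where "i < k" "e \<in> E" "e \<noteq> e0" "h = 2 * copy i e"
    | (link) p where "p < k" "h = 2 * p + 1"
  using assms by (auto simp: ring_E_def)

lemma finite_ring_E: "finite (ring_E k)"
  using finite_E by (simp add: ring_E_def)

lemma card_ring_V: "card (ring_V k) = k * card V"
proof -
  have "inj_on (\<lambda>(i, x). copy i x) ({..<k} \<times> V)" by (auto simp: inj_on_def)
  then show ?thesis by (simp add: ring_V_def card_image card_cartesian_product)
qed

lemma incident_ring:
  assumes "i < k" "x \<in> V"
  shows "incident_edges (ring_E k) (ring_ends k) (copy i x) =
    (\<lambda>e. 2 * copy i e) ` (incident_edges E ends x - {e0}) \<union>
    (\<lambda>p. 2 * p + 1) ` {p. p < k \<and> (p = i \<and> x = v \<or> ring_next k p = i \<and> x = u)}"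
    (is "?L = ?R")
proof
  show "?L \<subseteq> ?R"
  proof
    fix h assume "h \<in> ?L"
    then have h: "h \<in> ring_E k" "copy i x \<in> ring_ends k h" by (auto simp: incident_edges_def)
    from h(1) show "h \<in> ?R"
    proof (cases rule: ring_E_cases)
      case copy_edge then show ?thesis using h(2) by (auto simp: incident_edges_def)
    next
      case link then show ?thesis using h(2) by auto
    qed
  qed
  show "?R \<subseteq> ?L" using assms by (auto simp: incident_edges_def)
qed

lemma card_incident_ring:
  assumes k: "2 \<le> k" and i: "i < k" and x: "x \<in> V"
  shows "card (incident_edges (ring_E k) (ring_ends k) (copy i x)) = 3"
proof -
  let ?A = "incident_edges E ends x - {e0}"
  let ?P = "{p. p < k \<and> (p = i \<and> x = v \<or> ring_next k p = i \<and> x = u)}"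
  have fin: "finite ?A" using finite_E by (simp add: incident_edges_def)
  have "card ((\<lambda>e. 2 * copy i e) ` ?A) = card ?A" by (rule card_image) (auto simp: inj_on_def)
  moreover have "card ((\<lambda>p. 2 * p + 1) ` ?P) = card ?P" by (rule card_image) (auto simp: inj_on_def)
  moreover have "(\<lambda>e. 2 * copy i e) ` ?A \<inter> (\<lambda>p. 2 * p + 1) ` ?P = {}" by auto
  ultimately have "card ((\<lambda>e. 2 * copy i e) ` ?A \<union> (\<lambda>p. 2 * p + 1) ` ?P) = card ?A + card ?P"
    using fin by (subst card_Un_disjoint) auto
  moreover have "card ?A + card ?P = 3"
  proof (cases "x = u \<or> x = v")
    case True
    then have "e0 \<in> incident_edges E ends x" using e0_in_E ends_e0 by (auto simp: incident_edges_def)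
    then have "card ?A = 2" using card_incident[OF x] fin by simp
    moreover have "?P = {if x = v then i else if i = 0 then k - 1 else i - 1}"
      using True u_ne_v i k by (auto simp: ring_next_def split: if_splits)
    ultimately show ?thesis by simp
  next
    case False
    then have "e0 \<notin> incident_edges E ends x" using ends_e0 by (auto simp: incident_edges_def)
    moreover have "?P = {}" using False by auto
    ultimately show ?thesis using card_incident[OF x] by simp
  qed
  ultimately show ?thesis using incident_ring[OF i x] by simp
qed

lemma cubic_ring: assumes "2 \<le> k" shows "cubic (ring_V k) (ring_E k) (ring_ends k)"
proof -
  have ends: "ring_ends k h \<subseteq> ring_V k \<and> card (ring_ends k h) = 2" if "h \<in> ring_E k" for h
    using that
  proof (cases rule: ring_E_cases)
    case (copy_edge i e)
    have "card (copy i ` ends e) = 2"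
      using card_ends[OF copy_edge(2)] by (subst card_image) (auto simp: inj_on_def)
    then show ?thesis using copy_edge ends_subset[OF copy_edge(2)] by auto
  next
    case (link p)
    then show ?thesis using ring_next_less[OF link(1)] u_ne_v u_in_V v_in_V by auto
  qed
  have incident: "card (incident_edges (ring_E k) (ring_ends k) a) = 3" if "a \<in> ring_V k" for a
  proof -
    from that obtain i x where "i < k" "x \<in> V" "a = copy i x" by (auto simp: in_ring_V)
    then show ?thesis using card_incident_ring assms by simp
  qed
  have "finite (ring_V k)" using finite_V by (simp add: ring_V_def)
  then show ?thesis unfolding cubic_def multigraph_def using ends incident finite_ring_E by blast
qed

lemma reach_ring_within_copy:
  assumes "(adj_in (E - {e0}) ends S)\<^sup>*\<^sup>* a b" "i < k" "copy i ` S \<subseteq> T"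
  shows "(adj_in (ring_E k) (ring_ends k) T)\<^sup>*\<^sup>* (copy i a) (copy i b)"
  using assms(1)
proof (induction rule: rtranclp.induct)
  case (rtrancl_into_rtrancl a b c)
  from rtrancl_into_rtrancl(2) obtain e where e: "e \<in> E" "e \<noteq> e0" "ends e = {b, c}" "b \<in> S" "c \<in> S"
    by (auto simp: adj_in_def)
  have "2 * copy i e \<in> ring_E k" "ring_ends k (2 * copy i e) = {copy i b, copy i c}"
    using e assms(2) by simp_all
  moreover have "copy i b \<in> T" "copy i c \<in> T" using e assms(3) by auto
  ultimately have "adj_in (ring_E k) (ring_ends k) T (copy i b) (copy i c)"
    unfolding adj_in_def by blast
  with rtrancl_into_rtrancl(3) show ?case by (rule rtranclp.rtrancl_into_rtrancl)
qed simp

lemma adj_ring_link: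
  assumes "p < k" "copy p v \<in> T" "copy (ring_next k p) u \<in> T"
  shows "adj_in (ring_E k) (ring_ends k) T (copy (ring_next k p) u) (copy p v)"
proof -
  have "Suc (2 * p) \<in> ring_E k" "ring_ends k (Suc (2 * p)) = {copy (ring_next k p) u, copy p v}"
    using assms(1) by (simp_all add: insert_commute)
  then show ?thesis unfolding adj_in_def using assms(2,3) by blast
qed

lemma reach_ring_minus_other_copy:
  assumes k: "2 \<le> k" and j: "j < k" and d: "d \<le> k - 2" and y: "y \<in> V"
  shows "(adj_in (ring_E k) (ring_ends k) (ring_V k - {copy j x}))\<^sup>*\<^sup>*
    (copy (ring_after k j d) y) (copy (ring_next k j) u)"
  using d y
proof (induction d arbitrary: y)
  case 0
  have "ring_next k j < k" "ring_next k j \<noteq> j"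
    using ring_after_less_ne[OF k j, of 0] ring_after_0[OF j] by simp_all
  then have "(adj_in (ring_E k) (ring_ends k) (ring_V k - {copy j x}))\<^sup>*\<^sup>*
      (copy (ring_next k j) y) (copy (ring_next k j) u)"
    using 0 by (intro reach_ring_within_copy[OF reach_u_avoiding_e0]) auto
  then show ?case by (simp only: ring_after_0[OF j])
next
  case (Suc d)
  let ?R = "(adj_in (ring_E k) (ring_ends k) (ring_V k - {copy j x}))\<^sup>*\<^sup>*"
  let ?p = "ring_after k j d" and ?i = "ring_after k j (Suc d)"
  have p: "?p < k" "?p \<noteq> j" and i: "?i < k" "?i \<noteq> j"
    using ring_after_less_ne[OF k j, of d] ring_after_less_ne[OF k j, of "Suc d"] Suc(2) by auto
  have i_next: "?i = ring_next k ?p" using ring_after_Suc[OF k j Suc(2)] .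
  have within: "?R (copy ?i y) (copy ?i u)"
    using i Suc(3) by (intro reach_ring_within_copy[OF reach_u_avoiding_e0]) auto
  have link: "?R (copy ?i u) (copy ?p v)"
    unfolding i_next using p i i_next u_in_V v_in_V
    by (intro r_into_rtranclp adj_ring_link) auto
  have "?R (copy ?p v) (copy (ring_next k j) u)" using Suc v_in_V by simp
  then show ?case using within link by (meson rtranclp_trans)
qed

text \<open>Inside the copy j that lost a vertex, G - x is still connected, so a path leads to u
  or to v; from there a link edge leaves the copy.\<close>

lemma reach_ring_minus_same_copy:
  assumes k: "2 \<le> k" and j: "j < k" and x: "x \<in> V" and y: "y \<in> V - {x}"
  shows "(adj_in (ring_E k) (ring_ends k) (ring_V k - {copy j x}))\<^sup>*\<^sup>*
    (copy j y) (copy (ring_next k j) u)"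
proof -
  let ?T = "ring_V k - {copy j x}"
  let ?R = "(adj_in (ring_E k) (ring_ends k) ?T)\<^sup>*\<^sup>*"
  have "connected_on E ends (V - {x})" using two_conn x by (auto simp: two_connected_def)
  moreover have "u \<in> V - {x} \<or> v \<in> V - {x}" using u_ne_v u_in_V v_in_V by auto
  moreover have sub: "copy j ` (V - {x}) \<subseteq> ?T" using j by auto
  ultimately consider
      "u \<in> V - {x}" "(adj_in (E - {e0}) ends (V - {x}))\<^sup>*\<^sup>* y u"
    | "v \<in> V - {x}" "(adj_in (E - {e0}) ends (V - {x}))\<^sup>*\<^sup>* y v"
    using reach_end_avoiding_e0[OF _ y] by blast
  then show ?thesis
  proof cases
    case 1
    let ?p = "ring_after k j (k - 2)"
    have p: "?p < k" "?p \<noteq> j" "ring_next k ?p = j"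
      using ring_after_less_ne[OF k j, of "k - 2"] ring_after_last[OF k j] by auto
    have within: "?R (copy j y) (copy j u)" using reach_ring_within_copy[OF 1(2) j sub] .
    have "adj_in (ring_E k) (ring_ends k) ?T (copy (ring_next k ?p) u) (copy ?p v)"
      using p 1(1) v_in_V j by (intro adj_ring_link) auto
    then have link: "?R (copy j u) (copy ?p v)" unfolding p(3) by (rule r_into_rtranclp)
    have "?R (copy ?p v) (copy (ring_next k j) u)"
      using reach_ring_minus_other_copy[OF k j _ v_in_V] by simp
    then show ?thesis using within link by (meson rtranclp_trans)
  next
    case 2
    have within: "?R (copy j y) (copy j v)" using reach_ring_within_copy[OF 2(2) j sub] .
    have "adj_in (ring_E k) (ring_ends k) ?T (copy (ring_next k j) u) (copy j v)"
      using 2(1) u_in_V j ring_next_less[OF j] ring_after_less_ne[OF k j, of 0] ring_after_0[OF j]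
      by (intro adj_ring_link) auto
    then have "?R (copy j v) (copy (ring_next k j) u)" by (blast intro: r_into_rtranclp dest: adj_in_sym)
    with within show ?thesis by (rule rtranclp_trans)
  qed
qed

lemma connected_ring_minus:
  assumes k: "2 \<le> k" and j: "j < k" and x: "x \<in> V"
  shows "connected_on (ring_E k) (ring_ends k) (ring_V k - {copy j x})"
proof -
  let ?T = "ring_V k - {copy j x}" and ?t = "copy (ring_next k j) u"
  let ?R = "(adj_in (ring_E k) (ring_ends k) ?T)\<^sup>*\<^sup>*"
  have to_t: "?R a ?t" if "a \<in> ?T" for a
  proof -
    from that obtain i y where iy: "i < k" "y \<in> V" "a = copy i y" "\<not> (i = j \<and> y = x)"
      by (auto simp: in_ring_V)
    show ?thesis
    proof (cases "i = j")
      case False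
      then obtain d where "d \<le> k - 2" "ring_after k j d = i" using ring_after_surj[OF j iy(1)] by auto
      then show ?thesis using reach_ring_minus_other_copy[OF k j _ iy(2)] iy(3) by blast
    next
      case True
      then show ?thesis using reach_ring_minus_same_copy[OF k j x, of y] iy by simp
    qed
  qed
  have "?t \<in> ?T" using ring_after_less_ne[OF k j, of 0] ring_after_0[OF j] u_in_V by auto
  moreover have "?R a b" if "a \<in> ?T" "b \<in> ?T" for a b
    using to_t[OF that(1)] reach_in_sym[OF to_t[OF that(2)]] by (rule rtranclp_trans)
  ultimately show ?thesis unfolding connected_on_def by blast
qed

lemma two_connected_ring: assumes k: "2 \<le> k" shows "two_connected (ring_V k) (ring_E k) (ring_ends k)"
proof -
  have "2 * 2 \<le> k * card V" using mult_le_mono[OF k two_le_card_V] .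
  then have four: "4 \<le> card (ring_V k)" using card_ring_V by simp
  have minus: "connected_on (ring_E k) (ring_ends k) (ring_V k - {w})" if "w \<in> ring_V k" for w
    using that connected_ring_minus[OF k] by (auto simp: in_ring_V)
  have "(adj_in (ring_E k) (ring_ends k) (ring_V k))\<^sup>*\<^sup>* a b"
    if ab: "a \<in> ring_V k" "b \<in> ring_V k" for a b
  proof -
    have "\<not> ring_V k \<subseteq> {a, b}"
    proof
      assume "ring_V k \<subseteq> {a, b}"
      then have "card (ring_V k) \<le> card {a, b}" by (intro card_mono) auto
      also have "\<dots> \<le> 2" by (cases "a = b") auto
      finally show False using four by simp
    qed
    then obtain w where w: "w \<in> ring_V k" "w \<noteq> a" "w \<noteq> b" by auto
    have "(adj_in (ring_E k) (ring_ends k) (ring_V k - {w}))\<^sup>*\<^sup>* a b"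
      using minus[OF w(1)] ab w by (auto simp: connected_on_def)
    then show ?thesis by (rule reach_in_mono) auto
  qed
  moreover have "ring_V k \<noteq> {}" using four by auto
  ultimately have "connected_on (ring_E k) (ring_ends k) (ring_V k)" by (simp add: connected_on_def)
  then show ?thesis unfolding two_connected_def using four minus by simp
qed

lemma card_incident_ends_e0: "card (incident_edges E ends u \<union> incident_edges E ends v) \<le> 5"
proof -
  let ?U = "incident_edges E ends u" and ?W = "incident_edges E ends v"
  have fin: "finite ?U" "finite ?W" using finite_E by (auto simp: incident_edges_def)
  have e0: "e0 \<in> ?U" "e0 \<in> ?W" using e0_in_E ends_e0 by (auto simp: incident_edges_def)
  have "card (?U \<union> ?W) + card (?U \<inter> ?W) = card ?U + card ?W" using card_Un_Int fin by metis
  moreover have "1 \<le> card (?U \<inter> ?W)" using e0 fin by (auto simp: Suc_le_eq card_gt_0_iff)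
  ultimately show ?thesis using card_incident[OF u_in_V] card_incident[OF v_in_V] by simp
qed

lemma proper_coloring_from_copy:
  assumes c: "proper_edge_coloring 5 (ring_E k) (ring_ends k) c" and i: "i < k"
  obtains cG where "proper_edge_coloring 5 E ends cG" "\<forall>e\<in>E - {e0}. cG e = c (2 * copy i e)"
proof -
  let ?N = "incident_edges E ends u \<union> incident_edges E ends v - {e0}"
  define X where "X = (\<lambda>e. c (2 * copy i e)) ` ?N"
  have "finite ?N" using finite_E by (auto simp: incident_edges_def)
  moreover have "card ?N < 5"
    using card_incident_ends_e0 calculation e0_in_E ends_e0 by (simp add: incident_edges_def)
  ultimately obtain g where g: "g \<in> {1..5}" "g \<notin> X"
    unfolding X_def using ex_color_not_in_image by blast
  define cG where "cG = (\<lambda>e. if e = e0 then g else c (2 * copy i e))"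
  have c_range: "\<forall>h\<in>ring_E k. c h \<in> {1..5}"
    and c_adj: "\<forall>h\<in>ring_E k. \<forall>h'\<in>ring_E k.
      h \<noteq> h' \<and> ring_ends k h \<inter> ring_ends k h' \<noteq> {} \<longrightarrow> c h \<noteq> c h'"
    using c by (auto simp: proper_edge_coloring_def)
  have near_e0: "cG e \<in> X" if "e \<in> E" "e \<noteq> e0" "ends e \<inter> ends e0 \<noteq> {}" for e
    using that ends_e0 by (auto simp: X_def cG_def incident_edges_def)
  have "proper_edge_coloring 5 E ends cG"
    unfolding proper_edge_coloring_def
  proof (intro conjI ballI impI)
    fix e assume "e \<in> E" then show "cG e \<in> {1..5}" using c_range g i by (auto simp: cG_def)
  next
    fix e e' assume ee: "e \<in> E" "e' \<in> E" "e \<noteq> e' \<and> ends e \<inter> ends e' \<noteq> {}"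
    show "cG e \<noteq> cG e'"
    proof (cases "e = e0 \<or> e' = e0")
      case True
      then show ?thesis using near_e0[of e'] near_e0[of e] ee g by (auto simp: cG_def Int_commute)
    next
      case False
      have "ring_ends k (2 * copy i e) \<inter> ring_ends k (2 * copy i e') \<noteq> {}" using ee by auto
      then show ?thesis using c_adj ee False i by (auto simp: cG_def)
    qed
  qed
  then show thesis using that by (simp add: cG_def)
qed

lemma edge_color_span_ring_copy:
  assumes "i < k" "e \<in> E" "e \<noteq> e0" "u \<notin> ends e" "v \<notin> ends e"
    and cG: "\<forall>e\<in>E - {e0}. cG e = c (2 * copy i e)"
  shows "edge_color_span (ring_E k) (ring_ends k) c (2 * copy i e) = edge_color_span E ends cG e"
proof -
  have "colors_at (ring_E k) (ring_ends k) c (copy i x) = colors_at E ends cG x" if x: "x \<in> ends e" for x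
  proof -
    have xV: "x \<in> V" and xuv: "x \<noteq> u" "x \<noteq> v" using x ends_subset[OF assms(2)] assms(4,5) by auto
    have no_e0: "e0 \<notin> incident_edges E ends x" using xuv ends_e0 by (auto simp: incident_edges_def)
    have "colors_at (ring_E k) (ring_ends k) c (copy i x) =
        c ` (\<lambda>e. 2 * copy i e) ` incident_edges E ends x"
      unfolding colors_at_def incident_ring[OF assms(1) xV] using xuv no_e0 by auto
    also have "\<dots> = cG ` incident_edges E ends x"
      unfolding image_image
    proof (rule image_cong[OF refl])
      fix e' assume "e' \<in> incident_edges E ends x"
      then have "e' \<in> E - {e0}" using no_e0 by (auto simp: incident_edges_def)
      then show "c (2 * copy i e') = cG e'" using cG by simp
    qed
    finally show ?thesis by (simp add: colors_at_def)
  qed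
  then show ?thesis unfolding edge_color_span_def ring_ends_copy by (simp add: image_image)
qed

lemma abnormal_from_copy_subset:
  assumes "i < k" and cG: "\<forall>e\<in>E - {e0}. cG e = c (2 * copy i e)"
  shows "abnormal_edges E ends cG \<subseteq> incident_edges E ends u \<union> incident_edges E ends v \<union>
    {e \<in> E - {e0}. 2 * copy i e \<in> abnormal_edges (ring_E k) (ring_ends k) c}"
proof
  fix e assume e: "e \<in> abnormal_edges E ends cG"
  then have eE: "e \<in> E" by (simp add: abnormal_edges_def)
  show "e \<in> incident_edges E ends u \<union> incident_edges E ends v \<union>
    {e \<in> E - {e0}. 2 * copy i e \<in> abnormal_edges (ring_E k) (ring_ends k) c}"
  proof (cases "e = e0 \<or> u \<in> ends e \<or> v \<in> ends e")
    case True
    then show ?thesis using eE ends_e0 by (auto simp: incident_edges_def)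
  next
    case False
    then show ?thesis
      using e eE assms edge_color_span_ring_copy[OF assms(1) eE _ _ _ cG]
      by (auto simp: abnormal_edges_def poor_edge_def rich_edge_def)
  qed
qed

lemma copy_has_abnormal_edge:
  assumes bad: "\<forall>c. proper_edge_coloring 5 E ends c \<longrightarrow> 5 < card (abnormal_edges E ends c)"
    and c: "proper_edge_coloring 5 (ring_E k) (ring_ends k) c" and i: "i < k"
  shows "\<exists>e\<in>E - {e0}. 2 * copy i e \<in> abnormal_edges (ring_E k) (ring_ends k) c"
proof (rule ccontr)
  assume none: "\<not> ?thesis"
  obtain cG where cG: "proper_edge_coloring 5 E ends cG" "\<forall>e\<in>E - {e0}. cG e = c (2 * copy i e)"
    using proper_coloring_from_copy[OF c i] .
  have "abnormal_edges E ends cG \<subseteq> incident_edges E ends u \<union> incident_edges E ends v"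
    using abnormal_from_copy_subset[OF i cG(2)] none by blast
  moreover have "finite (incident_edges E ends u \<union> incident_edges E ends v)"
    using finite_E by (simp add: incident_edges_def)
  ultimately have "card (abnormal_edges E ends cG)
      \<le> card (incident_edges E ends u \<union> incident_edges E ends v)"
    by (rule card_mono[rotated])
  then have "card (abnormal_edges E ends cG) \<le> 5" using card_incident_ends_e0 by linarith
  then show False using bad cG(1) by force
qed

lemma card_abnormal_ring:
  assumes bad: "\<forall>c. proper_edge_coloring 5 E ends c \<longrightarrow> 5 < card (abnormal_edges E ends c)"
    and c: "proper_edge_coloring 5 (ring_E k) (ring_ends k) c"
  shows "k \<le> card (abnormal_edges (ring_E k) (ring_ends k) c)"
proof -
  have "\<forall>i\<in>{..<k}. \<exists>e. e \<in> E - {e0} \<and> 2 * copy i e \<in> abnormal_edges (ring_E k) (ring_ends k) c"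
    using copy_has_abnormal_edge[OF bad c] by blast
  then obtain g where g: "\<forall>i\<in>{..<k}. g i \<in> E - {e0} \<and>
      2 * copy i (g i) \<in> abnormal_edges (ring_E k) (ring_ends k) c"
    by (auto dest!: bchoice)
  have "inj_on (\<lambda>i. 2 * copy i (g i)) {..<k}" by (auto simp: inj_on_def)
  moreover have "finite (abnormal_edges (ring_E k) (ring_ends k) c)"
    using finite_ring_E by (simp add: abnormal_edges_def)
  ultimately have "card {..<k} \<le> card (abnormal_edges (ring_E k) (ring_ends k) c)"
    using g by (intro card_inj_on_le) auto
  then show ?thesis by simp
qed

end

lemma ring_of_bad_graph:
  assumes cubic: "cubic V E ends" and two_conn: "two_connected V E ends"
    and bad: "\<forall>c. proper_edge_coloring 5 E ends c \<longrightarrow> 5 < card (abnormal_edges E ends c)"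
    and k: "2 \<le> k"
  shows "\<exists>V' E' ends'. cubic V' E' ends' \<and> two_connected V' E' ends' \<and> card V' = k * card V \<and>
    (\<forall>c. proper_edge_coloring 5 E' ends' c \<longrightarrow> k \<le> card (abnormal_edges E' ends' c))"
proof -
  obtain x where x: "x \<in> V" using two_conn by (auto simp: two_connected_def connected_on_def)
  then have "incident_edges E ends x \<noteq> {}" using cubic by (auto simp: cubic_def)
  then obtain e0 where e0: "e0 \<in> E" using incident_edges_def by fastforce
  then have "card (ends e0) = 2" using cubic by (simp add: cubic_def multigraph_def)
  then obtain a b where "ends e0 = {a, b}" "a \<noteq> b" by (auto simp: card_2_iff)
  then interpret cubic_2conn_with_edge V E ends a b e0
    using cubic two_conn e0 by unfold_locales
  show ?thesis
    using cubic_ring[OF k] two_connected_ring[OF k] card_ring_V card_abnormal_ring[OF bad] by blast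
qed

theorem mainTheorem2:
  shows "(\<forall>V E ends. cubic V E ends \<and> two_connected V E ends \<longrightarrow>
            (\<exists>c. proper_edge_coloring 5 E ends c \<and> card (abnormal_edges E ends c) \<le> 5))
     \<longleftrightarrow>
         (\<exists>f. sublinear f \<and>
            (\<forall>V E ends. cubic V E ends \<and> two_connected V E ends \<longrightarrow>
              (\<exists>c. proper_edge_coloring 5 E ends c \<and>
                   card (abnormal_edges E ends c) \<le> f (card V))))"
    (is "?a \<longleftrightarrow> ?b")
proof
  assume ?a
  then show ?b using sublinear_const[of 5] by blast
next
  assume ?b
  then obtain f where f: "sublinear f"
    and bound: "\<And>V E ends. cubic V E ends \<Longrightarrow> two_connected V E ends \<Longrightarrow>
      \<exists>c. proper_edge_coloring 5 E ends c \<and> card (abnormal_edges E ends c) \<le> f (card V)"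
    by blast
  show ?a
  proof (rule ccontr)
    assume "\<not> ?a"
    then obtain V E ends where G: "cubic V E ends" "two_connected V E ends"
      and bad: "\<forall>c. proper_edge_coloring 5 E ends c \<longrightarrow> 5 < card (abnormal_edges E ends c)"
      by force
    have "0 < card V" using G(2) by (simp add: two_connected_def)
    then obtain k where k: "k \<ge> 2" "f (k * card V) < k"
      using sublinear_ex_less_at_multiple[OF f] by blast
    then obtain V' E' ends' where H: "cubic V' E' ends'" "two_connected V' E' ends'"
      "card V' = k * card V"
      and many: "\<forall>c. proper_edge_coloring 5 E' ends' c \<longrightarrow> k \<le> card (abnormal_edges E' ends' c)"
      using ring_of_bad_graph[OF G bad] by blast
    obtain c where "proper_edge_coloring 5 E' ends' c" "card (abnormal_edges E' ends' c) \<le> f (k * card V)"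
      using bound[OF H(1,2)] H(3) by auto
    then show False using many k(2) by fastforce
  qed
qed

end
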